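(* Let $X$ be a completely regular Hausdorff space and let $A(X)$ be an adequate subspace of $C(X)$. Then $\hat{A}_b(X)=\{\hat f: f\in A_b(X)\}$ is a subspace of $C(\mathcal{A}X)$ that precisely separates points from closed sets in $\mathcal{A}X$.
   Context: All functions are real-valued; $C(X)$ is the continuous real functions on $X$, $1_X$ the constant $1$. A subspace $A(Z)\subseteq C(Z)$ separates points from closed sets if for every $z\in Z$ and closed $F\subseteq Z$ with $z\notin F$ there is $f\in A(Z)$ with $f(z)=1$ and $f=0$ on $F$; it does so precisely if such $f$ can always be chosen with values in $[0,1]$. $A(X)$ is adequate if (a) it separates points from closed sets and contains the constant functions; (b) there is a continuous nondecreasing $g:\mathbb{R}\to\mathbb{R}$ with $g(t)=0$ for $t\le0$, $g(t)=1$ for $t\ge1$, and $g\circ f\in A(X)$ for all $f\in A(X)$; (c) every $f\in A(X)$ is $f_1-f_2$ with $f_1,f_2\in A(X)$ nonnegative. The $A(X)$-compactification $\mathcal{A}X$ is the closure of the image of the embedding $i:X\to[-\infty,\infty]^{A(X)}$, $i(x)(\varphi)=\varphi(x)$, in the product of copies of $[-\infty,\infty]$ (order topology); $X$ is identified with $i(X)$. For $f\in A(X)$, $\hat f:\mathcal{A}X\to[-\infty,\infty]$, $\hat f(x)=x(f)$, is the continuous extension of $f$. $A_b(X)$ denotes the bounded functions in $A(X)$; for $f\in A_b(X)$, $\hat f$ is real-valued and continuous on $\mathcal{A}X$. *)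

theory Defs
  imports "HOL-Analysis.Analysis"
begin

text \<open>Functions on a space Z are represented extensionally: as functions that are
  undefined outside topspace Z.\<close>

definition subspace_of_C :: "'a topology \<Rightarrow> ('a \<Rightarrow> real) set \<Rightarrow> bool" where
  "subspace_of_C Z S \<longleftrightarrow>
     (\<forall>f\<in>S. continuous_map Z euclideanreal f \<and> f \<in> extensional (topspace Z)) \<and>
     restrict (\<lambda>_. 0) (topspace Z) \<in> S \<and>
     (\<forall>f\<in>S. \<forall>g\<in>S. \<forall>c::real. restrict (\<lambda>z. f z + c * g z) (topspace Z) \<in> S)"

definition separates_points_closed :: "'a topology \<Rightarrow> ('a \<Rightarrow> real) set \<Rightarrow> bool" where
  "separates_points_closed Z S \<longleftrightarrow>
     (\<forall>z F. z \<in> topspace Z \<and> closedin Z F \<and> z \<notin> F \<longrightarrow>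
        (\<exists>f\<in>S. f z = 1 \<and> (\<forall>y\<in>F. f y = 0)))"

definition precisely_separates_points_closed :: "'a topology \<Rightarrow> ('a \<Rightarrow> real) set \<Rightarrow> bool" where
  "precisely_separates_points_closed Z S \<longleftrightarrow>
     (\<forall>z F. z \<in> topspace Z \<and> closedin Z F \<and> z \<notin> F \<longrightarrow>
        (\<exists>f\<in>S. f z = 1 \<and> (\<forall>y\<in>F. f y = 0) \<and> (\<forall>y\<in>topspace Z. 0 \<le> f y \<and> f y \<le> 1)))"

definition adequate :: "'a topology \<Rightarrow> ('a \<Rightarrow> real) set \<Rightarrow> bool" where
  "adequate X A \<longleftrightarrow>
     subspace_of_C X A \<and>
     separates_points_closed X A \<and>
     (\<forall>c::real. restrict (\<lambda>_. c) (topspace X) \<in> A) \<and>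
     (\<exists>g::real \<Rightarrow> real. continuous_on UNIV g \<and> mono g \<and>
        (\<forall>t\<le>0. g t = 0) \<and> (\<forall>t\<ge>1. g t = 1) \<and>
        (\<forall>f\<in>A. restrict (g \<circ> f) (topspace X) \<in> A)) \<and>
     (\<forall>f\<in>A. \<exists>f1\<in>A. \<exists>f2\<in>A. \<forall>x\<in>topspace X.
        0 \<le> f1 x \<and> 0 \<le> f2 x \<and> f x = f1 x - f2 x)"

definition bounded_part :: "'a topology \<Rightarrow> ('a \<Rightarrow> real) set \<Rightarrow> ('a \<Rightarrow> real) set" where
  "bounded_part X A = {f \<in> A. \<exists>B. \<forall>x\<in>topspace X. \<bar>f x\<bar> \<le> B}"

definition prod_top :: "('a \<Rightarrow> real) set \<Rightarrow> (('a \<Rightarrow> real) \<Rightarrow> ereal) topology" where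
  "prod_top A = product_topology (\<lambda>_. (euclidean :: ereal topology)) A"

definition embed :: "('a \<Rightarrow> real) set \<Rightarrow> 'a \<Rightarrow> (('a \<Rightarrow> real) \<Rightarrow> ereal)" where
  "embed A x = (\<lambda>\<phi>\<in>A. ereal (\<phi> x))"

definition cpt_set :: "'a topology \<Rightarrow> ('a \<Rightarrow> real) set \<Rightarrow> (('a \<Rightarrow> real) \<Rightarrow> ereal) set" where
  "cpt_set X A = (prod_top A) closure_of (embed A ` topspace X)"

definition cpt :: "'a topology \<Rightarrow> ('a \<Rightarrow> real) set \<Rightarrow> (('a \<Rightarrow> real) \<Rightarrow> ereal) topology" where
  "cpt X A = subtopology (prod_top A) (cpt_set X A)"

text \<open>Extension hat f (p) = p(f), real-valued for bounded f.\<close>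
definition hat :: "'a topology \<Rightarrow> ('a \<Rightarrow> real) set \<Rightarrow> ('a \<Rightarrow> real) \<Rightarrow> (('a \<Rightarrow> real) \<Rightarrow> ereal) \<Rightarrow> real" where
  "hat X A f = restrict (\<lambda>p. real_of_ereal (p f)) (cpt_set X A)"

end

theory Submission
  imports Defs
begin

text \<open>A point p of the compactification is a limit of embedded points, so it lies in every
  closed set containing the embedded points near p. Applied to the sets {q. q \<phi> \<in> K}, this
  says that p(\<phi>) lies in the closure of the values of \<phi>, and that p(\<phi>) = c whenever
  \<phi> = c near p; continuity and linearity of the extensions follow.
  If p is outside a closed set F, a basic box around p avoiding F constrains only finitely many
  \<phi>_j \<in> A. Affine reparametrisations of the cutoff g give \<psi>_j \<in> A, \<psi>_j \<ge> 0, vanishing where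
  \<phi>_j is near p(\<phi>_j) and at least 1 where \<phi>_j is near the complement of the box side (also
  when p(\<phi>_j) = \<plusminus>\<infinity>). Then f = 1 - g(\<Sum>_j \<psi>_j) is bounded with values in [0,1], equals 1 near
  p and 0 near every point of F, so its extension separates p from F.\<close>

lemma topspace_prod_top: "topspace (prod_top A) = PiE A (\<lambda>_. UNIV)"
  unfolding prod_top_def by simp

lemma cpt_set_subset_topspace: "cpt_set X A \<subseteq> topspace (prod_top A)"
  unfolding cpt_set_def by (rule closure_of_subset_topspace)

lemma topspace_cpt: "topspace (cpt X A) = cpt_set X A"
  unfolding cpt_def using cpt_set_subset_topspace[of X A] by auto

lemma embed_in_topspace: "embed A x \<in> topspace (prod_top A)"
  unfolding topspace_prod_top embed_def by simp

lemma embed_in_cpt_set: "x \<in> topspace X \<Longrightarrow> embed A x \<in> cpt_set X A"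
  unfolding cpt_set_def
  by (rule closure_of_subset[THEN subsetD]) (use embed_in_topspace in auto)

lemma embed_apply: "\<phi> \<in> A \<Longrightarrow> embed A x \<phi> = ereal (\<phi> x)"
  unfolding embed_def by simp

lemma continuous_map_prod_top_apply:
  "\<phi> \<in> A \<Longrightarrow> continuous_map (prod_top A) euclidean (\<lambda>q. q \<phi>)"
  unfolding prod_top_def by (rule continuous_map_product_projection)

lemma closedin_prod_top_apply:
  "\<phi> \<in> A \<Longrightarrow> closed K \<Longrightarrow> closedin (prod_top A) {q \<in> topspace (prod_top A). q \<phi> \<in> K}"
  using closedin_continuous_map_preimage[OF continuous_map_prod_top_apply] by simp

lemma cpt_set_mem_closedin:
  assumes p: "p \<in> cpt_set X A" and N: "openin (prod_top A) N" "p \<in> N"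
    and C: "closedin (prod_top A) C"
    and near: "\<And>x. x \<in> topspace X \<Longrightarrow> embed A x \<in> N \<Longrightarrow> embed A x \<in> C"
  shows "p \<in> C"
proof -
  have "p \<in> (prod_top A) closure_of (N \<inter> embed A ` topspace X)"
    using openin_Int_closure_of_subset[OF N(1)] p N(2) unfolding cpt_set_def by blast
  moreover have "N \<inter> embed A ` topspace X \<subseteq> C" using near by blast
  ultimately show ?thesis
    using closure_of_minimal[OF _ C] by blast
qed

lemma cpt_value_in_closed:
  assumes p: "p \<in> cpt_set X A" and \<phi>: "\<phi> \<in> A" and K: "closed K"
    and vals: "\<And>x. x \<in> topspace X \<Longrightarrow> ereal (\<phi> x) \<in> K"
  shows "p \<phi> \<in> K"
proof -
  have "p \<in> {q \<in> topspace (prod_top A). q \<phi> \<in> K}"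
    by (rule cpt_set_mem_closedin[OF p openin_topspace _ closedin_prod_top_apply[OF \<phi> K]])
       (use p cpt_set_subset_topspace vals embed_in_topspace embed_apply[OF \<phi>] in auto)
  then show ?thesis by simp
qed

lemma cpt_value_locally_const:
  assumes p: "p \<in> cpt_set X A" and N: "openin (prod_top A) N" "p \<in> N" and \<phi>: "\<phi> \<in> A"
    and near: "\<And>x. x \<in> topspace X \<Longrightarrow> embed A x \<in> N \<Longrightarrow> \<phi> x = c"
  shows "p \<phi> = ereal c"
proof -
  have "p \<in> {q \<in> topspace (prod_top A). q \<phi> \<in> {ereal c}}"
    by (rule cpt_set_mem_closedin[OF p N closedin_prod_top_apply[OF \<phi>]])
       (use near embed_in_topspace embed_apply[OF \<phi>] in auto)
  then show ?thesis by simp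
qed

lemma cpt_value_bounded:
  assumes "q \<in> cpt_set X A" "\<phi> \<in> A" "\<And>x. x \<in> topspace X \<Longrightarrow> a \<le> \<phi> x \<and> \<phi> x \<le> b"
  shows "q \<phi> \<in> {ereal a..ereal b}"
  by (rule cpt_value_in_closed[OF assms(1,2)]) (use assms(3) in auto)

lemma hat_bounded:
  assumes "q \<in> cpt_set X A" "\<phi> \<in> A" "\<And>x. x \<in> topspace X \<Longrightarrow> a \<le> \<phi> x \<and> \<phi> x \<le> b"
  shows "a \<le> hat X A \<phi> q \<and> hat X A \<phi> q \<le> b"
proof -
  have "q \<phi> \<in> {ereal a..ereal b}" by (rule cpt_value_bounded[OF assms])
  then show ?thesis using assms(1) by (cases "q \<phi>") (auto simp: hat_def)
qed

lemma hat_embed: "f \<in> A \<Longrightarrow> x \<in> topspace X \<Longrightarrow> hat X A f (embed A x) = f x"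
  by (simp add: hat_def embed_in_cpt_set embed_apply)

lemma continuous_map_hat:
  assumes "f \<in> bounded_part X A"
  shows "continuous_map (cpt X A) euclideanreal (hat X A f)"
proof -
  obtain B where f: "f \<in> A" and B: "\<And>x. x \<in> topspace X \<Longrightarrow> \<bar>f x\<bar> \<le> B"
    using assms unfolding bounded_part_def by blast
  define S where "S = {ereal (-B)..ereal B}"
  have "continuous_map (cpt X A) euclidean (\<lambda>q. q f)"
    unfolding cpt_def by (rule continuous_map_from_subtopology[OF continuous_map_prod_top_apply[OF f]])
  moreover have "q f \<in> S" if "q \<in> cpt_set X A" for q
    unfolding S_def by (rule cpt_value_bounded[OF that f]) (use B abs_le_iff in fastforce)
  ultimately have "continuous_map (cpt X A) (subtopology euclidean S) (\<lambda>q. q f)"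
    by (auto intro: continuous_map_into_subtopology simp: topspace_cpt)
  moreover have "continuous_on S real_of_ereal"
    by (intro continuous_at_imp_continuous_on ballI continuous_at_of_ereal) (auto simp: S_def)
  then have "continuous_map (subtopology euclidean S) euclideanreal real_of_ereal"
    by simp
  ultimately have "continuous_map (cpt X A) euclideanreal (\<lambda>q. real_of_ereal (q f))"
    by (metis (no_types, lifting) continuous_map_compose comp_apply continuous_map_eq)
  then show ?thesis
    by (rule continuous_map_eq) (simp add: hat_def topspace_cpt)
qed

lemma adequate_extensional: "adequate X A \<Longrightarrow> f \<in> A \<Longrightarrow> f \<in> extensional (topspace X)"
  unfolding adequate_def subspace_of_C_def by blast

lemma adequate_restrict_cong:
  assumes "adequate X A" "f \<in> A" "\<And>x. x \<in> topspace X \<Longrightarrow> f x = h x"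
  shows "restrict h (topspace X) \<in> A"
proof -
  have "f = restrict h (topspace X)"
    using adequate_extensional[OF assms(1,2)] assms(3) by (auto simp: extensional_def)
  then show ?thesis using assms(2) by simp
qed

lemma adequate_const: "adequate X A \<Longrightarrow> restrict (\<lambda>_. c) (topspace X) \<in> A"
  unfolding adequate_def by blast

lemma adequate_add_scaled:
  "adequate X A \<Longrightarrow> f \<in> A \<Longrightarrow> g \<in> A \<Longrightarrow> restrict (\<lambda>x. f x + c * g x) (topspace X) \<in> A"
  unfolding adequate_def subspace_of_C_def by blast

lemma adequate_add:
  assumes "adequate X A" "f \<in> A" "g \<in> A"
  shows "restrict (\<lambda>x. f x + g x) (topspace X) \<in> A"
  using adequate_add_scaled[OF assms, of 1] by simp

lemma adequate_affine:
  assumes "adequate X A" "\<phi> \<in> A"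
  shows "restrict (\<lambda>x. \<alpha> * \<phi> x + \<beta>) (topspace X) \<in> A"
proof -
  have "restrict (\<lambda>x. restrict (\<lambda>_. \<beta>) (topspace X) x + \<alpha> * \<phi> x) (topspace X) \<in> A"
    by (rule adequate_add_scaled[OF assms(1) adequate_const[OF assms(1)] assms(2)])
  then show ?thesis
    by (rule adequate_restrict_cong[OF assms(1)]) auto
qed

lemma adequate_sum:
  assumes "adequate X A" "finite J" "\<And>j. j \<in> J \<Longrightarrow> \<psi> j \<in> A"
  shows "restrict (\<lambda>x. \<Sum>j\<in>J. \<psi> j x) (topspace X) \<in> A"
  using assms(2,3)
proof (induction J rule: finite_induct)
  case empty
  have "restrict (\<lambda>x. \<Sum>j\<in>{}. \<psi> j x) (topspace X) = restrict (\<lambda>_. 0) (topspace X)" by simp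
  then show ?case using adequate_const[OF assms(1), of 0] by metis
next
  case (insert i J)
  have "restrict (\<lambda>x. restrict (\<lambda>x. \<Sum>j\<in>J. \<psi> j x) (topspace X) x + \<psi> i x) (topspace X) \<in> A"
    by (rule adequate_add[OF assms(1)]) (use insert in auto)
  then show ?case
    by (rule adequate_restrict_cong[OF assms(1)]) (use insert in auto)
qed

lemma bounded_part_add_scaled:
  assumes "adequate X A" "f \<in> bounded_part X A" "g \<in> bounded_part X A"
  shows "restrict (\<lambda>x. f x + c * g x) (topspace X) \<in> bounded_part X A"
proof -
  obtain Bf Bg where "\<And>x. x \<in> topspace X \<Longrightarrow> \<bar>f x\<bar> \<le> Bf" "\<And>x. x \<in> topspace X \<Longrightarrow> \<bar>g x\<bar> \<le> Bg"
    using assms(2,3) unfolding bounded_part_def by blast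
  then have "\<bar>f x + c * g x\<bar> \<le> Bf + \<bar>c\<bar> * Bg" if "x \<in> topspace X" for x
    using that abs_triangle_ineq[of "f x" "c * g x"] mult_left_mono[of "\<bar>g x\<bar>" Bg "\<bar>c\<bar>"]
    by (fastforce simp: abs_mult)
  moreover have "restrict (\<lambda>x. f x + c * g x) (topspace X) \<in> A"
    using adequate_add_scaled[OF assms(1)] assms(2,3) unfolding bounded_part_def by blast
  ultimately show ?thesis unfolding bounded_part_def by auto
qed

lemma hat_add_scaled:
  assumes f: "f \<in> bounded_part X A" and g: "g \<in> bounded_part X A"
    and h: "h \<in> bounded_part X A" "\<And>x. x \<in> topspace X \<Longrightarrow> h x = f x + c * g x"
  shows "hat X A h = restrict (\<lambda>z. hat X A f z + c * hat X A g z) (topspace (cpt X A))"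
proof
  fix z
  show "hat X A h z = restrict (\<lambda>z. hat X A f z + c * hat X A g z) (topspace (cpt X A)) z"
  proof (cases "z \<in> cpt_set X A")
    case True
    have "cpt_set X A \<inter> embed A ` topspace X = embed A ` topspace X"
      using embed_in_cpt_set[of _ X A] by blast
    then have "z \<in> (cpt X A) closure_of (embed A ` topspace X)"
      using True unfolding cpt_def closure_of_subtopology by (simp add: cpt_set_def)
    moreover have "continuous_map (cpt X A) euclideanreal (\<lambda>z. hat X A f z + c * hat X A g z)"
      using continuous_map_hat[OF f] continuous_map_hat[OF g] by (intro continuous_intros)
    moreover have "hat X A h y = hat X A f y + c * hat X A g y" if y: "y \<in> embed A ` topspace X" for y
    proof -
      obtain x where x: "x \<in> topspace X" "y = embed A x" using y by blast
      have "f \<in> A" "g \<in> A" "h \<in> A" using f g h(1) unfolding bounded_part_def by auto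
      then show ?thesis using x h(2) by (simp add: hat_embed)
    qed
    ultimately have "hat X A h z = hat X A f z + c * hat X A g z"
      \<comment> \<open>both sides are continuous and agree on the dense set of embedded points\<close>
      using forall_in_closure_of_eq[OF _ _ continuous_map_hat[OF h(1)]] by simp
    then show ?thesis using True by (simp add: topspace_cpt)
  next
    case False
    then show ?thesis by (simp add: topspace_cpt hat_def)
  qed
qed

lemma subspace_of_C_hat_bounded_part:
  assumes ad: "adequate X A"
  shows "subspace_of_C (cpt X A) (hat X A ` bounded_part X A)"
  unfolding subspace_of_C_def
proof (intro conjI ballI allI)
  fix F assume "F \<in> hat X A ` bounded_part X A"
  then obtain f where f: "f \<in> bounded_part X A" "F = hat X A f" by blast
  show "continuous_map (cpt X A) euclideanreal F" unfolding f(2) by (rule continuous_map_hat[OF f(1)])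
  show "F \<in> extensional (topspace (cpt X A))" unfolding f topspace_cpt hat_def by simp
next
  define zero where "zero = restrict (\<lambda>_. 0::real) (topspace X)"
  have "zero \<in> bounded_part X A"
    using adequate_const[OF ad] unfolding bounded_part_def zero_def by auto
  moreover have "hat X A zero = restrict (\<lambda>_. 0) (topspace (cpt X A))"
  proof
    fix z
    have "hat X A zero z = 0" if "z \<in> cpt_set X A"
      using hat_bounded[OF that adequate_const[OF ad, of 0], where a=0 and b=0] by (simp add: zero_def)
    then show "hat X A zero z = restrict (\<lambda>_. 0) (topspace (cpt X A)) z"
      by (simp add: topspace_cpt hat_def)
  qed
  ultimately show "restrict (\<lambda>_. 0) (topspace (cpt X A)) \<in> hat X A ` bounded_part X A"
    by (metis image_eqI)
next
  fix F G and c :: real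
  assume "F \<in> hat X A ` bounded_part X A" "G \<in> hat X A ` bounded_part X A"
  then obtain f g where f: "f \<in> bounded_part X A" "F = hat X A f"
    and g: "g \<in> bounded_part X A" "G = hat X A g" by blast
  have h: "restrict (\<lambda>x. f x + c * g x) (topspace X) \<in> bounded_part X A"
    by (rule bounded_part_add_scaled[OF ad f(1) g(1)])
  have "hat X A (restrict (\<lambda>x. f x + c * g x) (topspace X)) =
      restrict (\<lambda>z. F z + c * G z) (topspace (cpt X A))"
    unfolding f(2) g(2) by (rule hat_add_scaled[OF f(1) g(1) h]) simp
  then show "restrict (\<lambda>z. F z + c * G z) (topspace (cpt X A)) \<in> hat X A ` bounded_part X A"
    by (rule image_eqI[OF sym h])
qed

definition cutoff_for ::
  "'a topology \<Rightarrow> ('a \<Rightarrow> real) set \<Rightarrow> ('a \<Rightarrow> real) \<Rightarrow> ereal set \<Rightarrow> ereal set \<Rightarrow> ('a \<Rightarrow> real) \<Rightarrow> bool"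
  where "cutoff_for X A \<phi> V W \<psi> \<longleftrightarrow> \<psi> \<in> A \<and>
    (\<forall>x\<in>topspace X. 0 \<le> \<psi> x \<and> (ereal (\<phi> x) \<in> V \<longrightarrow> \<psi> x = 0) \<and> (ereal (\<phi> x) \<in> W \<longrightarrow> 1 \<le> \<psi> x))"

locale adequate_cutoff =
  fixes X :: "'a topology" and A and g :: "real \<Rightarrow> real"
  assumes adequate: "adequate X A"
    and mono: "mono g" and g0: "\<And>t. t \<le> 0 \<Longrightarrow> g t = 0" and g1: "\<And>t. t \<ge> 1 \<Longrightarrow> g t = 1"
    and comp_closed: "\<forall>f\<in>A. restrict (g \<circ> f) (topspace X) \<in> A"
begin

lemma g_nonneg: "0 \<le> g t"
  using g0[of 0] g0[of t] monoD[OF mono, of 0 t] by (cases "t \<le> 0") auto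

lemma g_le_one: "g t \<le> 1"
  using g1[of 1] g1[of t] monoD[OF mono, of t 1] by (cases "t \<ge> 1") auto

lemma cutoff_comp_affine:
  assumes "\<phi> \<in> A"
  shows "restrict (\<lambda>x. g ((\<phi> x - a) / d)) (topspace X) \<in> A"
proof -
  have "restrict (\<lambda>x. (1/d) * \<phi> x + (- a / d)) (topspace X) \<in> A"
    by (rule adequate_affine[OF adequate assms])
  then have "restrict (g \<circ> restrict (\<lambda>x. (1/d) * \<phi> x + (- a / d)) (topspace X)) (topspace X) \<in> A"
    using comp_closed by blast
  then show ?thesis
    by (rule adequate_restrict_cong[OF adequate]) (simp add: diff_divide_distrib)
qed

lemma one_minus_cutoff_comp_affine:
  assumes "\<phi> \<in> A"
  shows "restrict (\<lambda>x. 1 - g ((\<phi> x - a) / d)) (topspace X) \<in> A"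
  using adequate_affine[OF adequate cutoff_comp_affine[OF assms, where a=a and d=d], where \<alpha>="-1" and \<beta>=1]
  by (rule adequate_restrict_cong[OF adequate]) simp

lemma cutoff_for_upper:
  assumes "\<phi> \<in> A"
  shows "cutoff_for X A \<phi> {ereal (M+2)<..} {..<ereal (M+1)}
           (restrict (\<lambda>x. 1 - g (\<phi> x - (M+1))) (topspace X))"
  unfolding cutoff_for_def
  using one_minus_cutoff_comp_affine[OF assms, where a="M+1" and d=1] g0 g1 g_le_one by simp

lemma cutoff_for_lower:
  assumes "\<phi> \<in> A"
  shows "cutoff_for X A \<phi> {..<ereal (M-2)} {ereal (M-1)<..}
           (restrict (\<lambda>x. g (\<phi> x - (M-2))) (topspace X))"
  unfolding cutoff_for_def
  using cutoff_comp_affine[OF assms, where a="M-2" and d=1] g0 g1 g_nonneg by simp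

lemma cutoff_for_real:
  assumes \<phi>: "\<phi> \<in> A" and e: "e > 0"
  shows "cutoff_for X A \<phi> {ereal (r - e/4)<..<ereal (r + e/4)} ({..<ereal (r - e/2)} \<union> {ereal (r + e/2)<..})
    (restrict (\<lambda>x. (1 - g ((\<phi> x - (r - e/2)) / (e/4))) + g ((\<phi> x - (r + e/4)) / (e/4))) (topspace X))"
    (is "cutoff_for X A \<phi> ?V ?W ?\<psi>")
  unfolding cutoff_for_def
proof (intro conjI ballI impI)
  show "?\<psi> \<in> A"
    using adequate_add[OF adequate one_minus_cutoff_comp_affine[OF \<phi>, where a="r - e/2" and d="e/4"]
        cutoff_comp_affine[OF \<phi>, where a="r + e/4" and d="e/4"]]
    by (rule adequate_restrict_cong[OF adequate]) simp
  fix x assume x: "x \<in> topspace X"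
  let ?s = "(\<phi> x - (r - e/2)) / (e/4)" and ?t = "(\<phi> x - (r + e/4)) / (e/4)"
  show "0 \<le> ?\<psi> x"
    using x g_nonneg[of ?t] g_le_one[of ?s] by simp
  show "?\<psi> x = 0" if "ereal (\<phi> x) \<in> ?V"
  proof -
    have "?s \<ge> 1" "?t \<le> 0" using that e by (simp_all add: field_simps)
    then show ?thesis using x g0 g1 by simp
  qed
  show "1 \<le> ?\<psi> x" if "ereal (\<phi> x) \<in> ?W"
  proof -
    have "?s \<le> 0 \<or> ?t \<ge> 1" using that e by (auto simp: field_simps)
    then show ?thesis using x g0 g1 g_nonneg[of ?t] g_le_one[of ?s] by auto
  qed
qed

lemma cutoff_for_nhds:
  assumes \<phi>: "\<phi> \<in> A" and U: "open U" "e0 \<in> U"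
  obtains \<psi> V W where "open V" "e0 \<in> V" "open W" "- U \<subseteq> W" "cutoff_for X A \<phi> V W \<psi>"
proof (cases e0)
  case PInf
  obtain M where M: "{ereal M<..} \<subseteq> U" using open_PInfty2[OF U(1)] PInf U(2) by blast
  have "- U \<subseteq> {..<ereal (M+1)}"
  proof
    fix y assume "y \<in> - U"
    then have "\<not> ereal M < y" using M by auto
    then show "y \<in> {..<ereal (M+1)}" by (cases y) auto
  qed
  then show ?thesis using that[OF _ _ _ _ cutoff_for_upper[OF \<phi>]] PInf by simp
next
  case MInf
  obtain M where M: "{..<ereal M} \<subseteq> U" using open_MInfty2[OF U(1)] MInf U(2) by blast
  have "- U \<subseteq> {ereal (M-1)<..}"
  proof
    fix y assume "y \<in> - U"
    then have "\<not> y < ereal M" using M by auto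
    then show "y \<in> {ereal (M-1)<..}" by (cases y) auto
  qed
  then show ?thesis using that[OF _ _ _ _ cutoff_for_lower[OF \<phi>]] MInf by simp
next
  case (real r)
  have "open (ereal -` U)" "r \<in> ereal -` U"
    using ereal_openE[OF U(1)] U real by (metis, simp)
  then obtain e where e: "e > 0" "ball r e \<subseteq> ereal -` U"
    using open_contains_ball by blast
  have WU: "- U \<subseteq> {..<ereal (r - e/2)} \<union> {ereal (r + e/2)<..}"
  proof
    fix y assume y: "y \<in> - U"
    show "y \<in> {..<ereal (r - e/2)} \<union> {ereal (r + e/2)<..}"
    proof (cases y)
      case (real s)
      then have "s \<notin> ball r e" using e y by auto
      then show ?thesis using real e by (auto simp: dist_real_def)
    qed auto
  qed
  show ?thesis
    by (rule that[OF _ _ _ WU cutoff_for_real[OF \<phi> e(1)]]) (use real e(1) in auto)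
qed

lemma separating_function_near:
  assumes N: "openin (prod_top A) N" "p \<in> N"
  obtains k N' where "k \<in> A" "openin (prod_top A) N'" "p \<in> N'"
    "\<And>x. x \<in> topspace X \<Longrightarrow> embed A x \<in> N' \<Longrightarrow> k x = 0"
    "\<And>q. q \<in> topspace (prod_top A) - N \<Longrightarrow>
       \<exists>Q. openin (prod_top A) Q \<and> q \<in> Q \<and> (\<forall>x\<in>topspace X. embed A x \<in> Q \<longrightarrow> 1 \<le> k x)"
proof -
  obtain U where U: "finite {j \<in> A. U j \<noteq> UNIV}" "\<forall>j\<in>A. open (U j)" "p \<in> PiE A U" "PiE A U \<subseteq> N"
    using N unfolding prod_top_def openin_product_topology_alt by force
  define J where "J = {j \<in> A. U j \<noteq> UNIV}"
  have "\<exists>\<psi> V W. open V \<and> p j \<in> V \<and> open W \<and> - U j \<subseteq> W \<and> cutoff_for X A j V W \<psi>" if "j \<in> J" for j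
    using cutoff_for_nhds[of j "U j" "p j"] that U(2,3) by (auto simp: J_def PiE_iff)
  then obtain \<psi> V W where VW: "\<And>j. j \<in> J \<Longrightarrow>
      open (V j) \<and> p j \<in> V j \<and> open (W j) \<and> - U j \<subseteq> W j \<and> cutoff_for X A j (V j) (W j) (\<psi> j)"
    by metis
  define k where "k = restrict (\<lambda>x. \<Sum>j\<in>J. \<psi> j x) (topspace X)"
  define N' where "N' = PiE A (\<lambda>j. if j \<in> J then V j else UNIV)"
  show thesis
  proof
    show "k \<in> A"
      unfolding k_def using VW U(1) by (intro adequate_sum[OF adequate]) (auto simp: J_def cutoff_for_def)
    show "openin (prod_top A) N'"
      unfolding N'_def prod_top_def openin_PiE_gen
      using VW U(1) by (intro disjI2 conjI ballI) (auto intro: finite_subset simp: J_def)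
    show "p \<in> N'"
      using cpt_set_subset_topspace U(3) VW unfolding N'_def by (auto simp: PiE_iff)
    show "k x = 0" if x: "x \<in> topspace X" and "embed A x \<in> N'" for x
    proof -
      have "\<psi> j x = 0" if "j \<in> J" for j
      proof -
        have "j \<in> A" using that J_def by auto
        then have "embed A x j \<in> (if j \<in> J then V j else UNIV)"
          using \<open>embed A x \<in> N'\<close> unfolding N'_def PiE_iff by blast
        then have "embed A x j \<in> V j" using that by simp
        then show ?thesis using VW[OF that] x embed_apply[of j A x] that by (auto simp: cutoff_for_def J_def)
      qed
      then show ?thesis using x by (simp add: k_def)
    qed
    fix q assume q: "q \<in> topspace (prod_top A) - N"
    then have "q \<notin> PiE A U" using U(4) by blast
    then obtain j where j: "j \<in> A" "q j \<notin> U j"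
      using q unfolding topspace_prod_top by (auto simp: PiE_iff)
    then have jJ: "j \<in> J" unfolding J_def by auto
    show "\<exists>Q. openin (prod_top A) Q \<and> q \<in> Q \<and> (\<forall>x\<in>topspace X. embed A x \<in> Q \<longrightarrow> 1 \<le> k x)"
    proof (intro exI conjI ballI impI)
      show "openin (prod_top A) {r \<in> topspace (prod_top A). r j \<in> W j}"
        using openin_continuous_map_preimage[OF continuous_map_prod_top_apply[OF j(1)]] VW[OF jJ]
        by simp
      show "q \<in> {r \<in> topspace (prod_top A). r j \<in> W j}" using q j VW[OF jJ] by auto
      fix x assume x: "x \<in> topspace X" and "embed A x \<in> {r \<in> topspace (prod_top A). r j \<in> W j}"
      then have "1 \<le> \<psi> j x" using VW[OF jJ] embed_apply[OF j(1)] by (auto simp: cutoff_for_def)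
      also have "\<psi> j x \<le> (\<Sum>i\<in>J. \<psi> i x)"
        using jJ U(1) VW x by (intro member_le_sum) (auto simp: J_def cutoff_for_def)
      finally show "1 \<le> k x" using x by (simp add: k_def)
    qed
  qed
qed

lemma precisely_separates_hat:
  "precisely_separates_points_closed (cpt X A) (hat X A ` bounded_part X A)"
  unfolding precisely_separates_points_closed_def topspace_cpt
proof (intro allI impI)
  fix p F
  assume "p \<in> cpt_set X A \<and> closedin (cpt X A) F \<and> p \<notin> F"
  then have p: "p \<in> cpt_set X A" and F: "closedin (cpt X A) F" and pF: "p \<notin> F" by auto
  have F_sub: "F \<subseteq> cpt_set X A" using closedin_subset[OF F] topspace_cpt by auto
  have "openin (cpt X A) (cpt_set X A - F)"
    using F topspace_cpt unfolding closedin_def by metis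
  then obtain N where N: "openin (prod_top A) N" "cpt_set X A - F = N \<inter> cpt_set X A"
    unfolding cpt_def openin_subtopology by blast
  obtain k N' where k: "k \<in> A" and N': "openin (prod_top A) N'" "p \<in> N'"
    and k0: "\<And>x. x \<in> topspace X \<Longrightarrow> embed A x \<in> N' \<Longrightarrow> k x = 0"
    and k1: "\<And>q. q \<in> topspace (prod_top A) - N \<Longrightarrow>
       \<exists>Q. openin (prod_top A) Q \<and> q \<in> Q \<and> (\<forall>x\<in>topspace X. embed A x \<in> Q \<longrightarrow> 1 \<le> k x)"
    using separating_function_near[OF N(1)] N(2) p pF by blast
  define f where "f = restrict (\<lambda>x. 1 - g (k x)) (topspace X)"
  have f: "f \<in> A"
    using one_minus_cutoff_comp_affine[OF k, where a=0 and d=1] by (simp add: f_def)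
  have f01: "0 \<le> f x \<and> f x \<le> 1" if "x \<in> topspace X" for x
    using that g_nonneg g_le_one by (simp add: f_def)
  have pf: "p f = 1"
    using cpt_value_locally_const[OF p N' f, of 1] k0 g0 by (simp add: f_def one_ereal_def)
  have Ff: "y f = 0" if y: "y \<in> F" for y
  proof -
    have y': "y \<in> cpt_set X A" using y F_sub by blast
    obtain Q where Q': "openin (prod_top A) Q" "y \<in> Q" and Q: "\<forall>x\<in>topspace X. embed A x \<in> Q \<longrightarrow> 1 \<le> k x"
      using k1[of y] y F_sub N(2) cpt_set_subset_topspace by blast
    moreover have "f x = 0" if "x \<in> topspace X" "embed A x \<in> Q" for x
      using that Q g1 by (simp add: f_def)
    ultimately show ?thesis
      using cpt_value_locally_const[OF y' Q' f] by (simp add: zero_ereal_def)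
  qed
  have "f \<in> bounded_part X A"
    unfolding bounded_part_def using f f01 by force
  then show "\<exists>h\<in>hat X A ` bounded_part X A. h p = 1 \<and> (\<forall>y\<in>F. h y = 0) \<and>
          (\<forall>y\<in>cpt_set X A. 0 \<le> h y \<and> h y \<le> 1)"
  proof (intro bexI[of _ "hat X A f"] conjI ballI)
    show "hat X A f p = 1" using p pf by (simp add: hat_def)
    show "hat X A f y = 0" if "y \<in> F" for y using that F_sub Ff[OF that] by (auto simp: hat_def)
    show "0 \<le> hat X A f y" "hat X A f y \<le> 1" if "y \<in> cpt_set X A" for y
      using hat_bounded[OF that f f01] by auto
  qed simp
qed

end

theorem lemma3p3:
  fixes X :: "'a topology" and A :: "('a \<Rightarrow> real) set"
  assumes "completely_regular_space X" and "Hausdorff_space X"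
    and "adequate X A"
  shows "subspace_of_C (cpt X A) (hat X A ` bounded_part X A)
       \<and> precisely_separates_points_closed (cpt X A) (hat X A ` bounded_part X A)"
proof
  show "subspace_of_C (cpt X A) (hat X A ` bounded_part X A)"
    by (rule subspace_of_C_hat_bounded_part[OF assms(3)])
  obtain g where "mono g" "\<forall>t\<le>0. g t = 0" "\<forall>t\<ge>1. g t = 1"
      "\<forall>f\<in>A. restrict (g \<circ> f) (topspace X) \<in> A"
    using assms(3) unfolding adequate_def by blast
  then interpret adequate_cutoff X A g
    using assms(3) by unfold_locales auto
  show "precisely_separates_points_closed (cpt X A) (hat X A ` bounded_part X A)"
    by (rule precisely_separates_hat)
qed

end
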